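(* Let $L$ be a compact convex subset of $\mathbb{R}^n$, and let $Q$ be a polytope in $\mathbb{R}^n$ having at most $d+1$ vertices, where $d < n$. Suppose that, for every $d$-dimensional linear subspace $\xi$, there exists $v \in \xi$ such that $Q_\xi + v \subseteq L_\xi$. Then there exists $v_0 \in \mathbb{R}^n$ such that $Q + v_0 \subseteq L$.
   Context: For a set $S\subseteq\mathbb{R}^n$ and a linear subspace $\xi$, $S_\xi$ denotes the orthogonal projection of $S$ onto $\xi$. *)

theory Defs
  imports "HOL-Analysis.Analysis"
begin

definition orth_proj :: "'a::euclidean_space set \<Rightarrow> 'a \<Rightarrow> 'a" where
  "orth_proj xi x = (THE p. p \<in> xi \<and> (\<forall>y\<in>xi. (x - p) \<bullet> y = 0))"

definition proj_set :: "'a::euclidean_space set \<Rightarrow> 'a set \<Rightarrow> 'a set" where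
  "proj_set xi S = orth_proj xi ` S"

definition vertices :: "'a::euclidean_space set \<Rightarrow> 'a set" where
  "vertices Q = {v. v extreme_point_of Q}"

end

theory Submission
  imports Defs
begin

text \<open>Translate L by -q for each vertex q of Q and minimise the sum of squared distances
  from a point w to these translates. At a minimiser the residuals u_q = w - c_q (c_q the
  nearest point of L - q) sum to zero, so they span a space of dimension at most d; choose a
  d-dimensional subspace xi containing them. The projection hypothesis for xi supplies a
  vector v such that, for each q, L - q meets the hyperplane through v orthogonal to u_q.
  Since c_q is the nearest point of the convex set L - q, this gives
  u_q \<bullet> (v - w) + |u_q|^2 \<le> 0, and summing over q forces every u_q to vanish.
  Hence w + q \<in> L for all vertices q, and by convexity w + Q \<subseteq> L.\<close>

lemma subspace_superset_with_dim:
  fixes U :: "'a::euclidean_space set"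
  assumes "dim U \<le> d" "d \<le> DIM('a)"
  obtains xi where "subspace xi" "U \<subseteq> xi" "dim xi = d"
proof -
  obtain B where B: "B \<subseteq> U" "independent B" "U \<subseteq> span B" "card B = dim U"
    by (rule basis_exists)
  obtain B' where B': "B \<subseteq> B'" "independent B'" "UNIV \<subseteq> span B'"
    by (rule maximal_independent_subset_extend[OF subset_UNIV B(2)]) blast
  have "finite B'"
    using B'(2) by (rule independent_imp_finite)
  moreover have "card B' = DIM('a)"
    using basis_card_eq_dim[of B' UNIV] B' by (simp add: dim_UNIV)
  ultimately obtain C where C: "B \<subseteq> C" "C \<subseteq> B'" "card C = d"
    using exists_subset_between[of B d B'] B(4) B'(1) assms by auto
  have "independent C"
    using B'(2) C(2) by (rule independent_mono)
  moreover have "U \<subseteq> span C"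
    using B(3) span_mono[OF C(1)] by blast
  ultimately show thesis
    using that[of "span C"] C(3) by (simp add: dim_eq_card_independent)
qed

lemma orth_proj_in_subspace_orthogonal:
  fixes xi :: "'a::euclidean_space set"
  assumes "subspace xi"
  shows "orth_proj xi x \<in> xi \<and> (\<forall>y\<in>xi. (x - orth_proj xi x) \<bullet> y = 0)"
proof -
  have span_xi: "span xi = xi"
    using assms by (rule span_eq_iff[THEN iffD2])
  obtain p z where pz: "p \<in> span xi" "\<And>w. w \<in> span xi \<Longrightarrow> orthogonal z w" "x = p + z"
    using orthogonal_subspace_decomp_exists[of xi x] by blast
  have p: "p \<in> xi \<and> (\<forall>y\<in>xi. (x - p) \<bullet> y = 0)"
    using pz span_xi by (simp add: orthogonal_def)
  have "p' = p" if p': "p' \<in> xi \<and> (\<forall>y\<in>xi. (x - p') \<bullet> y = 0)" for p'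
  proof -
    have "p' - p \<in> xi"
      using assms p p' by (blast intro: subspace_diff)
    then have "(p' - p) \<bullet> (p' - p) = (x - p) \<bullet> (p' - p) - (x - p') \<bullet> (p' - p)"
      and "(x - p) \<bullet> (p' - p) = 0" "(x - p') \<bullet> (p' - p) = 0"
      using p p' by (auto simp: inner_diff_left)
    then show ?thesis
      by simp
  qed
  with p show ?thesis
    unfolding orth_proj_def by (rule theI)
qed

lemma inner_orth_proj:
  fixes xi :: "'a::euclidean_space set"
  assumes "subspace xi" "u \<in> xi"
  shows "u \<bullet> orth_proj xi x = u \<bullet> x"
proof -
  have "(x - orth_proj xi x) \<bullet> u = 0"
    using orth_proj_in_subspace_orthogonal[OF assms(1)] assms(2) by blast
  then show ?thesis
    by (simp add: inner_commute inner_diff_right)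
qed

lemma proj_set_translate_subset_obtains_inner_eq:
  fixes xi :: "'a::euclidean_space set"
  assumes "subspace xi" "u \<in> xi"
    and "(\<lambda>x. x + v) ` proj_set xi Q \<subseteq> proj_set xi L" "q \<in> Q"
  obtains l where "l \<in> L" "u \<bullet> l = u \<bullet> (q + v)"
proof -
  obtain l where l: "l \<in> L" "orth_proj xi q + v = orth_proj xi l"
    using assms(3,4) unfolding proj_set_def by blast
  have "u \<bullet> (orth_proj xi q + v) = u \<bullet> orth_proj xi l"
    using l(2) by simp
  then have "u \<bullet> l = u \<bullet> (q + v)"
    by (simp add: inner_add_right inner_orth_proj[OF assms(1,2)])
  with l(1) show thesis
    by (rule that)
qed

lemma polytope_convex_hull_vertices:
  fixes Q :: "'a::euclidean_space set"
  assumes "polytope Q"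
  shows "finite (vertices Q)" "Q = convex hull vertices Q"
  using assms
  by (simp_all add: vertices_def finite_polyhedron_extreme_points polytope_imp_polyhedron
      Krein_Milman_Minkowski polytope_imp_compact polytope_imp_convex)

definition sq_dist_sum :: "'b set \<Rightarrow> ('b \<Rightarrow> 'a::euclidean_space set) \<Rightarrow> 'a \<Rightarrow> real" where
  "sq_dist_sum V K w = (\<Sum>q\<in>V. (dist w (closest_point (K q) w))\<^sup>2)"

lemma sq_dist_sum_nonneg: "0 \<le> sq_dist_sum V K w"
  unfolding sq_dist_sum_def by (intro sum_nonneg) simp

lemma continuous_on_sq_dist_sum:
  assumes "\<And>q. q \<in> V \<Longrightarrow> convex (K q) \<and> closed (K q) \<and> K q \<noteq> {}"
  shows "continuous_on A (sq_dist_sum V K)"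
  unfolding sq_dist_sum_def using assms
  by (intro continuous_on_sum continuous_on_power continuous_on_dist continuous_on_id
      continuous_on_closest_point) auto

lemma sq_dist_sum_attains_min:
  fixes K :: "'b \<Rightarrow> 'a::euclidean_space set"
  assumes "finite V" "q0 \<in> V" "bounded (K q0)"
    and K: "\<And>q. q \<in> V \<Longrightarrow> convex (K q) \<and> closed (K q) \<and> K q \<noteq> {}"
  obtains w0 where "\<And>w. sq_dist_sum V K w0 \<le> sq_dist_sum V K w"
proof -
  let ?f = "sq_dist_sum V K"
  obtain B where B: "\<And>x. x \<in> K q0 \<Longrightarrow> norm x \<le> B"
    using assms(3) bounded_iff by blast
  define R where "R = B + sqrt (?f 0)"
  have far: "?f 0 < ?f w" if "R < norm w" for w
  proof -
    let ?c = "closest_point (K q0) w"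
    have "norm ?c \<le> B"
      using B K[OF assms(2)] closest_point_in_set by blast
    then have "sqrt (?f 0) < dist w ?c"
      using that norm_triangle_ineq2[of w ?c] unfolding R_def dist_norm by linarith
    then have "(sqrt (?f 0))\<^sup>2 < (dist w ?c)\<^sup>2"
      by (intro power_strict_mono) (auto simp: sq_dist_sum_nonneg)
    then have "?f 0 < (dist w ?c)\<^sup>2"
      by (simp add: sq_dist_sum_nonneg)
    also have "\<dots> \<le> ?f w"
      unfolding sq_dist_sum_def by (rule member_le_sum) (use assms(1,2) in auto)
    finally show ?thesis .
  qed
  have "0 \<in> cball 0 R"
    using far[of 0] by (cases "R < 0") auto
  then have "\<exists>w0\<in>cball 0 R. \<forall>w\<in>cball 0 R. ?f w0 \<le> ?f w"
    by (intro continuous_attains_inf compact_cball continuous_on_sq_dist_sum[OF K]) auto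
  then obtain w0 where w0: "w0 \<in> cball 0 R" "\<And>w. w \<in> cball 0 R \<Longrightarrow> ?f w0 \<le> ?f w"
    by blast
  have "?f w0 \<le> ?f w" for w
  proof (cases "w \<in> cball 0 R")
    case True
    then show ?thesis
      by (rule w0(2))
  next
    case False
    then show ?thesis
      using far[of w] w0(2)[OF \<open>0 \<in> cball 0 R\<close>] by simp
  qed
  then show thesis
    by (rule that)
qed

text \<open>Moving w0 by minus the mean residual S / card V while keeping the old nearest points
  lowers the sum of squares by |S|^2 / card V.\<close>
lemma sq_dist_sum_min_residuals_sum_zero:
  fixes K :: "'b \<Rightarrow> 'a::euclidean_space set"
  assumes "finite V" and K: "\<And>q. q \<in> V \<Longrightarrow> closed (K q) \<and> K q \<noteq> {}"
    and min: "\<And>w. sq_dist_sum V K w0 \<le> sq_dist_sum V K w"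
  shows "(\<Sum>q\<in>V. w0 - closest_point (K q) w0) = 0"
proof (cases "V = {}")
  case False
  define u where "u q = w0 - closest_point (K q) w0" for q
  define S where "S = (\<Sum>q\<in>V. u q)"
  define N where "N = real (card V)"
  define h where "h = - (1 / N) *\<^sub>R S"
  have "N > 0"
    unfolding N_def using False assms(1) by (simp add: card_gt_0_iff)
  have "sq_dist_sum V K (w0 + h) \<le> (\<Sum>q\<in>V. (dist (w0 + h) (closest_point (K q) w0))\<^sup>2)"
    unfolding sq_dist_sum_def using K
    by (intro sum_mono power_mono closest_point_le closest_point_in_set) auto
  also have "\<dots> = (\<Sum>q\<in>V. u q \<bullet> u q + 2 * (u q \<bullet> h) + h \<bullet> h)"
    by (intro sum.cong refl)
      (simp add: u_def dist_norm power2_norm_eq_inner algebra_simps inner_add inner_diff inner_commute)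
  also have "\<dots> = sq_dist_sum V K w0 + 2 * (S \<bullet> h) + N * (h \<bullet> h)"
    unfolding sq_dist_sum_def S_def N_def
    by (simp add: sum.distrib sum_distrib_left inner_sum_left u_def dist_norm power2_norm_eq_inner)
  also have "\<dots> = sq_dist_sum V K w0 - (S \<bullet> S) / N"
    using \<open>N > 0\<close> unfolding h_def by (simp add: field_simps power2_eq_square)
  finally have "(S \<bullet> S) / N \<le> 0"
    using min[of "w0 + h"] by linarith
  then have "S \<bullet> S = 0"
    using \<open>N > 0\<close> inner_ge_zero[of S] by (simp add: divide_le_0_iff)
  then show ?thesis
    unfolding S_def u_def by simp
qed simp

lemma dim_image_less_card_if_sum_zero:
  assumes "finite V" "j \<in> V" "(\<Sum>q\<in>V. u q) = 0"
  shows "dim (u ` V) < card V"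
proof -
  have "u j = - (\<Sum>q\<in>V - {j}. u q)"
    using assms by (simp add: sum.remove eq_neg_iff_add_eq_0)
  moreover have "(\<Sum>q\<in>V - {j}. u q) \<in> span (u ` (V - {j}))"
    by (intro span_sum span_base) auto
  ultimately have "u j \<in> span (u ` (V - {j}))"
    by (simp add: span_neg)
  then have "span (u ` V) = span (u ` (V - {j}))"
    using assms(2) by (metis image_insert insert_Diff span_redundant)
  then have "dim (u ` V) = dim (u ` (V - {j}))"
    by (metis dim_span)
  also have "\<dots> \<le> card (V - {j})"
    using assms(1) dim_le_card' card_image_le by (meson finite_Diff finite_imageI order_trans)
  also have "\<dots> < card V"
    using card_gt_0_iff[of V] assms(1,2) by auto
  finally show ?thesis .
qed

lemma residuals_sum_zero_imp_mem_all:
  fixes K :: "'b \<Rightarrow> 'a::euclidean_space set" and w v :: 'a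
  defines "u q \<equiv> w - closest_point (K q) w"
  assumes "finite V" and K: "\<And>q. q \<in> V \<Longrightarrow> convex (K q) \<and> closed (K q) \<and> K q \<noteq> {}"
    and sum_zero: "(\<Sum>q\<in>V. u q) = 0"
    and hit: "\<And>q. q \<in> V \<Longrightarrow> \<exists>y\<in>K q. u q \<bullet> y = u q \<bullet> v"
  shows "\<forall>q\<in>V. w \<in> K q"
proof -
  have le: "u q \<bullet> (v - w) + u q \<bullet> u q \<le> 0" if q: "q \<in> V" for q
  proof -
    obtain y where "y \<in> K q" "u q \<bullet> y = u q \<bullet> v"
      using hit[OF q] by blast
    moreover have "u q \<bullet> (y - closest_point (K q) w) \<le> 0"
      using closest_point_dot K[OF q] \<open>y \<in> K q\<close> unfolding u_def by blast
    ultimately show ?thesis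
      unfolding u_def by (simp add: inner_diff_right)
  qed
  have "(\<Sum>q\<in>V. u q \<bullet> (v - w)) = 0"
    using sum_zero by (simp add: inner_sum_left[symmetric])
  then have "(\<Sum>q\<in>V. u q \<bullet> u q) \<le> 0"
    using sum_nonpos[of V "\<lambda>q. u q \<bullet> (v - w) + u q \<bullet> u q"] le by (simp add: sum.distrib)
  then have "\<forall>q\<in>V. u q \<bullet> u q = 0"
    using sum_nonneg_eq_0_iff[OF \<open>finite V\<close>, of "\<lambda>q. u q \<bullet> u q"]
    by (simp add: antisym sum_nonneg)
  then show ?thesis
    using closest_point_in_set K unfolding u_def by (metis eq_iff_diff_eq_0 inner_eq_zero_iff)
qed

lemma exists_translate_into_compact_convex:
  fixes L V :: "'a::euclidean_space set"
  assumes "compact L" "convex L" "L \<noteq> {}" "finite V" "V \<noteq> {}"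
    and hit: "\<And>U. dim U < card V \<Longrightarrow> \<exists>v. \<forall>q\<in>V. \<forall>u\<in>U. \<exists>l\<in>L. u \<bullet> l = u \<bullet> (q + v)"
  obtains w where "(+) w ` V \<subseteq> L"
proof -
  obtain q0 where "q0 \<in> V"
    using assms(5) by blast
  define K where "K q = (\<lambda>l. l - q) ` L" for q
  have K: "convex (K q) \<and> closed (K q) \<and> K q \<noteq> {}" and "bounded (K q)" for q
    unfolding K_def using assms(1-3)
    by (auto intro: convex_translation_subtract compact_imp_closed compact_imp_bounded
        compact_translation_subtract)
  obtain w where w_min: "\<And>w'. sq_dist_sum V K w \<le> sq_dist_sum V K w'"
    using \<open>finite V\<close> \<open>q0 \<in> V\<close> \<open>bounded (K q0)\<close> K by (rule sq_dist_sum_attains_min) blast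
  define u where "u q = w - closest_point (K q) w" for q
  have sum_zero: "(\<Sum>q\<in>V. u q) = 0"
    unfolding u_def by (rule sq_dist_sum_min_residuals_sum_zero[OF \<open>finite V\<close> _ w_min]) (use K in blast)
  then have "dim (u ` V) < card V"
    by (rule dim_image_less_card_if_sum_zero[OF \<open>finite V\<close> \<open>q0 \<in> V\<close>])
  then obtain v where v: "\<forall>q\<in>V. \<forall>u'\<in>u ` V. \<exists>l\<in>L. u' \<bullet> l = u' \<bullet> (q + v)"
    using hit by blast
  have "\<exists>y\<in>K q. u q \<bullet> y = u q \<bullet> v" if q: "q \<in> V" for q
  proof -
    obtain l where "l \<in> L" "u q \<bullet> l = u q \<bullet> (q + v)"
      using v q by blast
    then show ?thesis
      unfolding K_def by (intro bexI[of _ "l - q"]) (auto simp: inner_diff_right inner_add_right)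
  qed
  then have "\<forall>q\<in>V. w \<in> K q"
    using residuals_sum_zero_imp_mem_all[of V K w v, OF \<open>finite V\<close> K] sum_zero unfolding u_def by blast
  then have "(+) w ` V \<subseteq> L"
    unfolding K_def by (auto simp: algebra_simps)
  then show thesis
    by (rule that)
qed

lemma exists_translate_hitting_hyperplanes:
  fixes L Q U :: "'a::euclidean_space set"
  assumes "dim U \<le> d" "d \<le> DIM('a)"
    and shadows: "\<And>xi. subspace xi \<Longrightarrow> dim xi = d \<Longrightarrow>
           \<exists>v\<in>xi. (\<lambda>x. x + v) ` proj_set xi Q \<subseteq> proj_set xi L"
  shows "\<exists>v. \<forall>q\<in>Q. \<forall>u\<in>U. \<exists>l\<in>L. u \<bullet> l = u \<bullet> (q + v)"
proof -
  obtain xi where xi: "subspace xi" "U \<subseteq> xi" "dim xi = d"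
    using assms(1,2) by (rule subspace_superset_with_dim)
  then obtain v where v: "(\<lambda>x. x + v) ` proj_set xi Q \<subseteq> proj_set xi L"
    using shadows by blast
  have "\<exists>l\<in>L. u \<bullet> l = u \<bullet> (q + v)" if "q \<in> Q" "u \<in> U" for q u
  proof -
    have "u \<in> xi"
      using \<open>u \<in> U\<close> xi(2) by blast
    then obtain l where "l \<in> L" "u \<bullet> l = u \<bullet> (q + v)"
      using proj_set_translate_subset_obtains_inner_eq[OF xi(1) _ v \<open>q \<in> Q\<close>] by blast
    then show ?thesis
      by blast
  qed
  then show ?thesis
    by blast
qed

theorem lemma2p6:
  fixes L Q :: "'a::euclidean_space set" and d :: nat
  assumes "compact L" and "convex L"
    and "polytope Q" and "card (vertices Q) \<le> d + 1"
    and "d < DIM('a)"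
    and "\<And>xi. subspace xi \<Longrightarrow> dim xi = d \<Longrightarrow>
           \<exists>v\<in>xi. (\<lambda>x. x + v) ` proj_set xi Q \<subseteq> proj_set xi L"
  shows "\<exists>v0. (\<lambda>x. x + v0) ` Q \<subseteq> L"
proof -
  define V where "V = vertices Q"
  have "finite V" and Q: "Q = convex hull V"
    unfolding V_def using polytope_convex_hull_vertices[OF assms(3)] by auto
  have d_le: "d \<le> DIM('a)"
    using assms(5) by simp
  show ?thesis
  proof (cases "V = {}")
    case True
    then show ?thesis
      using Q by simp
  next
    case False
    have "V \<subseteq> Q"
      unfolding Q by (rule hull_subset)
    have "dim {0 :: 'a} \<le> d"
      by simp
    then obtain v0 where "\<forall>q\<in>Q. \<forall>u\<in>{0}. \<exists>l\<in>L. u \<bullet> l = u \<bullet> (q + v0)"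
      using exists_translate_hitting_hyperplanes[OF _ d_le assms(6)] by blast
    then have "L \<noteq> {}"
      using False \<open>V \<subseteq> Q\<close> by blast
    moreover have "\<exists>v. \<forall>q\<in>V. \<forall>u\<in>U. \<exists>l\<in>L. u \<bullet> l = u \<bullet> (q + v)" if "dim U < card V" for U
    proof -
      have "dim U \<le> d"
        using that assms(4) unfolding V_def by linarith
      then obtain v where "\<forall>q\<in>Q. \<forall>u\<in>U. \<exists>l\<in>L. u \<bullet> l = u \<bullet> (q + v)"
        using exists_translate_hitting_hyperplanes[OF _ d_le assms(6)] by blast
      then show ?thesis
        using \<open>V \<subseteq> Q\<close> by blast
    qed
    ultimately obtain w where "(+) w ` V \<subseteq> L"
      using exists_translate_into_compact_convex[OF assms(1,2) _ \<open>finite V\<close> False] by blast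
    then have "(+) w ` Q \<subseteq> L"
      unfolding Q convex_hull_translation[symmetric] using assms(2) by (rule hull_minimal)
    then show ?thesis
      by (metis add.commute image_cong)
  qed
qed

end
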